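(* Let $E$ be a disjoint combination of $E_1,\dots,E_n$ and fix $i$. If $M$ is a quasi-$E_i$ term and $M\to^*_{R_E}N$, then $N$ is a quasi-$E_i$ term and $F_{E_i}(M)\to^*_{R_E}F_{E_i}(N)$.
   Context: Fix names, variables, and constructors $\mathsf{pub},\mathsf{sign},\mathsf{blind},\langle\cdot,\cdot\rangle,\{\cdot\}_\cdot$. $E_1,\dots,E_n$ are equational theories with pairwise disjoint signatures $\Sigma_{E_i}$ (disjoint from the constructors), each containing at most one associative-commutative (AC) binary symbol $\oplus_i$ and each AC-convergent; $E$ is their union, presented by the rewrite system $R_E$ (the union of the individual rewrite systems) which is terminating and confluent modulo AC of all $\oplus_i$; $\to_{R_E}$ is one rewrite step modulo AC, $\to^*_{R_E}$ its reflexive-transitive closure; $\approx_E$ is equality modulo $E$. Terms are built from names, variables, the constructors and symbols of $\Sigma_E=\bigcup_i\Sigma_{E_i}$. A term is $E_i$-alien if its head symbol is not in $\Sigma_{E_i}$. A term $M$ is a quasi-$E_i$ term if every $E_i$-alien subterm of $M$ is in $E$-normal form. Fix a function $v_E$ assigning to each ground term a variable such that $v_E(M)=v_E(N)$ iff $M\approx_E N$. The $E_i$ abstraction function $F_{E_i}$ on ground terms is defined by: $F_{E_i}(u)=u$ if $u$ is a name; $F_{E_i}(g(u_1,\dots,u_k))=g(F_{E_i}(u_1),\dots,F_{E_i}(u_k))$ if $g\in\Sigma_{E_i}$; $F_{E_i}(u)=v_E(u)$ otherwise. *)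

theory Defs
  imports Main
begin

datatype cons = Pub | Sign | Blind | Pair | Enc

text \<open>Each theory symbol f belongs to the signature of exactly one theory,
  given by an index function thy (so the signatures are pairwise disjoint
  and disjoint from the constructors by construction).\<close>
datatype 'f sym = Cstr cons | Th 'f

datatype ('n, 'v, 'f) trm = Nm 'n | Var 'v | App "'f sym" "('n, 'v, 'f) trm list"

fun subst :: "('v \<Rightarrow> ('n, 'v, 'f) trm) \<Rightarrow> ('n, 'v, 'f) trm \<Rightarrow> ('n, 'v, 'f) trm" where
  "subst \<sigma> (Nm a) = Nm a"
| "subst \<sigma> (Var x) = \<sigma> x"
| "subst \<sigma> (App f ts) = App f (map (subst \<sigma>) ts)"

fun vars :: "('n, 'v, 'f) trm \<Rightarrow> 'v set" where
  "vars (Nm a) = {}"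
| "vars (Var x) = {x}"
| "vars (App f ts) = \<Union> (set (map vars ts))"

definition ground :: "('n, 'v, 'f) trm \<Rightarrow> bool" where
  "ground t \<longleftrightarrow> vars t = {}"

fun subterms :: "('n, 'v, 'f) trm \<Rightarrow> ('n, 'v, 'f) trm set" where
  "subterms (Nm a) = {Nm a}"
| "subterms (Var x) = {Var x}"
| "subterms (App f ts) = insert (App f ts) (\<Union> (set (map subterms ts)))"

fun pure_over :: "('f \<Rightarrow> bool) \<Rightarrow> ('n, 'v, 'f) trm \<Rightarrow> bool" where
  "pure_over P (Nm a) = False"
| "pure_over P (Var x) = True"
| "pure_over P (App (Cstr c) ts) = False"
| "pure_over P (App (Th f) ts) = (P f \<and> list_all (pure_over P) ts)"

inductive_set ctxt_cl :: "(('n, 'v, 'f) trm \<times> ('n, 'v, 'f) trm) set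
    \<Rightarrow> (('n, 'v, 'f) trm \<times> ('n, 'v, 'f) trm) set" for R where
  base: "(s, t) \<in> R \<Longrightarrow> (s, t) \<in> ctxt_cl R"
| ctxt: "(s, t) \<in> ctxt_cl R \<Longrightarrow> (App f (ss @ s # us), App f (ss @ t # us)) \<in> ctxt_cl R"

definition ac_root :: "'f set \<Rightarrow> (('n, 'v, 'f) trm \<times> ('n, 'v, 'f) trm) set" where
  "ac_root A =
     {(App (Th f) [x, y], App (Th f) [y, x]) | f x y. f \<in> A}
   \<union> {(App (Th f) [App (Th f) [x, y], z], App (Th f) [x, App (Th f) [y, z]]) | f x y z. f \<in> A}"

definition ac_eq :: "'f set \<Rightarrow> (('n, 'v, 'f) trm \<times> ('n, 'v, 'f) trm) set" where
  "ac_eq A = (ctxt_cl (ac_root A) \<union> (ctxt_cl (ac_root A))\<inverse>)\<^sup>*"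

definition rinst :: "(('n, 'v, 'f) trm \<times> ('n, 'v, 'f) trm) set
    \<Rightarrow> (('n, 'v, 'f) trm \<times> ('n, 'v, 'f) trm) set" where
  "rinst R = {(subst \<sigma> l, subst \<sigma> r) | \<sigma> l r. (l, r) \<in> R}"

definition rstep :: "(('n, 'v, 'f) trm \<times> ('n, 'v, 'f) trm) set
    \<Rightarrow> (('n, 'v, 'f) trm \<times> ('n, 'v, 'f) trm) set" where
  "rstep R = ctxt_cl (rinst R)"

definition rstep_mod :: "'f set \<Rightarrow> (('n, 'v, 'f) trm \<times> ('n, 'v, 'f) trm) set
    \<Rightarrow> (('n, 'v, 'f) trm \<times> ('n, 'v, 'f) trm) set" where
  "rstep_mod A R = ac_eq A O rstep R O ac_eq A"

definition NF_mod :: "'f set \<Rightarrow> (('n, 'v, 'f) trm \<times> ('n, 'v, 'f) trm) set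
    \<Rightarrow> ('n, 'v, 'f) trm \<Rightarrow> bool" where
  "NF_mod A R t \<longleftrightarrow> \<not> (\<exists>u. (t, u) \<in> rstep_mod A R)"

definition eq_mod :: "'f set \<Rightarrow> (('n, 'v, 'f) trm \<times> ('n, 'v, 'f) trm) set
    \<Rightarrow> (('n, 'v, 'f) trm \<times> ('n, 'v, 'f) trm) set" where
  "eq_mod A R = (rstep R \<union> (rstep R)\<inverse> \<union> ctxt_cl (ac_root A) \<union> (ctxt_cl (ac_root A))\<inverse>)\<^sup>*"

definition terminating_mod :: "'f set \<Rightarrow> (('n, 'v, 'f) trm \<times> ('n, 'v, 'f) trm) set \<Rightarrow> bool" where
  "terminating_mod A R \<longleftrightarrow> wf ((rstep_mod A R)\<inverse>)"

definition confluent_mod :: "'f set \<Rightarrow> (('n, 'v, 'f) trm \<times> ('n, 'v, 'f) trm) set \<Rightarrow> bool" where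
  "confluent_mod A R \<longleftrightarrow>
     (\<forall>s t u. (s, t) \<in> (rstep_mod A R)\<^sup>* \<and> (s, u) \<in> (rstep_mod A R)\<^sup>* \<longrightarrow>
        (\<exists>t' u'. (t, t') \<in> (rstep_mod A R)\<^sup>* \<and> (u, u') \<in> (rstep_mod A R)\<^sup>* \<and> (t', u') \<in> ac_eq A))"

definition rule_wf :: "('n, 'v, 'f) trm \<times> ('n, 'v, 'f) trm \<Rightarrow> bool" where
  "rule_wf lr \<longleftrightarrow> (\<forall>x. fst lr \<noteq> Var x) \<and> vars (snd lr) \<subseteq> vars (fst lr)"

definition alien :: "('f \<Rightarrow> nat) \<Rightarrow> nat \<Rightarrow> ('n, 'v, 'f) trm \<Rightarrow> bool" where
  "alien thy i t \<longleftrightarrow> \<not> (\<exists>g ts. t = App (Th g) ts \<and> thy g = i)"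

definition quasi :: "('f \<Rightarrow> nat) \<Rightarrow> nat \<Rightarrow> 'f set \<Rightarrow> (('n, 'v, 'f) trm \<times> ('n, 'v, 'f) trm) set
    \<Rightarrow> ('n, 'v, 'f) trm \<Rightarrow> bool" where
  "quasi thy i A R M \<longleftrightarrow> (\<forall>u \<in> subterms M. alien thy i u \<longrightarrow> NF_mod A R u)"

text \<open>The E_i abstraction function (only meaningful on ground terms).\<close>
fun absF :: "('f \<Rightarrow> nat) \<Rightarrow> nat \<Rightarrow> (('n, 'v, 'f) trm \<Rightarrow> 'v) \<Rightarrow> ('n, 'v, 'f) trm \<Rightarrow> ('n, 'v, 'f) trm" where
  "absF thy i vE (Nm a) = Nm a"
| "absF thy i vE (Var x) = Var (vE (Var x))"
| "absF thy i vE (App (Cstr c) ts) = Var (vE (App (Cstr c) ts))"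
| "absF thy i vE (App (Th g) ts) =
     (if thy g = i then App (Th g) (map (absF thy i vE) ts) else Var (vE (App (Th g) ts)))"

end

theory Submission
  imports Defs
begin

text \<open>A redex in a quasi-\<open>E\<^sub>i\<close> term is not in normal form, so neither it nor any term
  containing it is \<open>E\<^sub>i\<close>-alien: rewriting only happens inside the top \<open>E\<^sub>i\<close>-layer, with
  \<open>E\<^sub>i\<close>-rules (the signatures are disjoint). The abstraction \<open>F\<^sub>E\<^sub>i\<close> keeps that layer
  and only replaces the normal-form alien subterms by variables, so it maps the redex to
  an instance of the same rule. AC steps either happen inside the layer, where they are
  mirrored by AC steps on the abstraction, or inside an alien subterm, whose abstraction
  is unchanged because \<open>v\<^sub>E\<close> identifies AC-equal ground terms. Normal forms are closed
  under AC-equality and subterms, which gives the invariance of being quasi-\<open>E\<^sub>i\<close>.\<close>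

lemma ctxt_cl_mono: "X \<subseteq> Y \<Longrightarrow> ctxt_cl X \<subseteq> ctxt_cl Y"
proof (intro subrelI)
  fix s t assume "(s, t) \<in> ctxt_cl X" "X \<subseteq> Y"
  then show "(s, t) \<in> ctxt_cl Y"
    by (induction rule: ctxt_cl.induct) (auto intro: ctxt_cl.intros)
qed

lemma ctxt_cl_converse: "ctxt_cl (X\<inverse>) = (ctxt_cl X)\<inverse>"
proof -
  have conv: "(t, s) \<in> ctxt_cl X" if "(s, t) \<in> ctxt_cl (X\<inverse>)" for s t X
    using that by (induction rule: ctxt_cl.induct) (auto intro: ctxt_cl.intros)
  show ?thesis
    using conv[of _ _ X] conv[of _ _ "X\<inverse>"] by auto
qed

lemma ctxt_cl_Un: "ctxt_cl (X \<union> Y) = ctxt_cl X \<union> ctxt_cl Y"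
proof
  show "ctxt_cl (X \<union> Y) \<subseteq> ctxt_cl X \<union> ctxt_cl Y"
  proof (intro subrelI)
    fix s t assume "(s, t) \<in> ctxt_cl (X \<union> Y)"
    then show "(s, t) \<in> ctxt_cl X \<union> ctxt_cl Y"
      by (induction rule: ctxt_cl.induct) (auto intro: ctxt_cl.intros)
  qed
qed (simp add: ctxt_cl_mono)

lemma ac_eq_ctxt_cl_sym: "ac_eq A = (ctxt_cl (ac_root A \<union> (ac_root A)\<inverse>))\<^sup>*"
  by (simp add: ac_eq_def ctxt_cl_Un ctxt_cl_converse)

lemma ac_eq_refl: "(s, s) \<in> ac_eq A"
  by (simp add: ac_eq_def)

lemma ac_eq_trans: "(s, t) \<in> ac_eq A \<Longrightarrow> (t, u) \<in> ac_eq A \<Longrightarrow> (s, u) \<in> ac_eq A"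
  unfolding ac_eq_def by (rule rtrancl_trans)

lemma ac_eq_ctxt: "(s, t) \<in> ac_eq A \<Longrightarrow> (App f (ss @ s # us), App f (ss @ t # us)) \<in> ac_eq A"
  unfolding ac_eq_ctxt_cl_sym
  by (induction rule: rtrancl_induct) (auto intro: ctxt_cl.ctxt rtrancl_into_rtrancl)

lemma ac_eq_subset_eq_mod: "ac_eq A \<subseteq> eq_mod A R"
  unfolding ac_eq_def eq_mod_def by (rule rtrancl_mono) blast

lemma vars_ac_root_sym: "(s, t) \<in> ctxt_cl (ac_root A \<union> (ac_root A)\<inverse>) \<Longrightarrow> vars t = vars s"
  by (induction rule: ctxt_cl.induct) (auto simp: ac_root_def)

lemma ground_ac_eq: "(s, t) \<in> ac_eq A \<Longrightarrow> ground s \<Longrightarrow> ground t"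
  unfolding ac_eq_ctxt_cl_sym ground_def
  by (induction rule: rtrancl_induct) (auto dest: vars_ac_root_sym)

lemma rstep_mod_ctxt:
  "(s, t) \<in> rstep_mod A R \<Longrightarrow> (App f (ss @ s # us), App f (ss @ t # us)) \<in> rstep_mod A R"
  unfolding rstep_mod_def rstep_def by (blast intro: ac_eq_ctxt ctxt_cl.ctxt)

lemma rstep_imp_rstep_mod: "(s, t) \<in> rstep R \<Longrightarrow> (s, t) \<in> rstep_mod A R"
  unfolding rstep_mod_def using ac_eq_refl by blast

lemma NF_mod_ac_eq: "(s, t) \<in> ac_eq A \<Longrightarrow> NF_mod A R s \<Longrightarrow> NF_mod A R t"
  unfolding NF_mod_def rstep_mod_def by (blast intro: ac_eq_trans)

lemma subterms_refl: "t \<in> subterms t"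
  by (cases t) auto

lemma subterms_trans: "u \<in> subterms t \<Longrightarrow> v \<in> subterms u \<Longrightarrow> v \<in> subterms t"
  by (induction t) auto

lemma NF_mod_subterm: "NF_mod A R t \<Longrightarrow> u \<in> subterms t \<Longrightarrow> NF_mod A R u"
proof (induction t)
  case (App f ts)
  show ?case
  proof (cases "u = App f ts")
    case False
    then obtain t where t: "t \<in> set ts" "u \<in> subterms t"
      using App.prems by auto
    then obtain ss us where ts: "ts = ss @ t # us"
      by (meson split_list)
    have "NF_mod A R t"
      using App.prems(1) rstep_mod_ctxt unfolding NF_mod_def ts by blast
    then show ?thesis
      using App.IH t by blast
  qed (use App.prems in simp)
qed auto

lemma quasi_App:
  "quasi thy i A R (App f ts) \<longleftrightarrow>
     (alien thy i (App f ts) \<longrightarrow> NF_mod A R (App f ts)) \<and> (\<forall>t\<in>set ts. quasi thy i A R t)"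
  unfolding quasi_def by auto

lemma quasi_subterm: "quasi thy i A R t \<Longrightarrow> u \<in> subterms t \<Longrightarrow> quasi thy i A R u"
  unfolding quasi_def using subterms_trans by blast

lemma NF_mod_imp_quasi: "NF_mod A R t \<Longrightarrow> quasi thy i A R t"
  unfolding quasi_def using NF_mod_subterm by blast

lemma quasi_not_NF_mod_imp_layer:
  assumes "quasi thy i A R s" "\<not> NF_mod A R s"
  obtains g ts where "s = App (Th g) ts" "thy g = i"
  using assms subterms_refl[of s] unfolding quasi_def alien_def by blast

lemma quasi_ctxt_cl:
  assumes "(s, t) \<in> ctxt_cl X" "quasi thy i A R s"
    and NF_step: "\<And>a b. (a, b) \<in> ctxt_cl X \<Longrightarrow> NF_mod A R a \<Longrightarrow> NF_mod A R b"
    and quasi_root: "\<And>a b. (a, b) \<in> X \<Longrightarrow> quasi thy i A R a \<Longrightarrow> quasi thy i A R b"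
  shows "quasi thy i A R t"
  using assms(1,2)
proof (induction rule: ctxt_cl.induct)
  case (base s t)
  then show ?case by (rule quasi_root)
next
  case (ctxt s t f ss us)
  have "(App f (ss @ s # us), App f (ss @ t # us)) \<in> ctxt_cl X"
    using ctxt.hyps by (rule ctxt_cl.ctxt)
  with ctxt.prems have "alien thy i (App f (ss @ t # us)) \<longrightarrow> NF_mod A R (App f (ss @ t # us))"
    using NF_step by (auto simp: quasi_App alien_def)
  moreover have "quasi thy i A R t"
    using ctxt.IH ctxt.prems by (simp add: quasi_App)
  ultimately show ?case
    using ctxt.prems by (auto simp: quasi_App)
qed

lemma quasi_ac_root_sym:
  assumes "(a, b) \<in> ac_root A \<union> (ac_root A)\<inverse>" "quasi thy i A R a"
  shows "quasi thy i A R b"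
proof -
  have "(a, b) \<in> ac_eq A"
    using assms(1) unfolding ac_eq_ctxt_cl_sym by (blast intro: ctxt_cl.base)
  then have "NF_mod A R a \<Longrightarrow> NF_mod A R b"
    by (rule NF_mod_ac_eq)
  then show ?thesis
    using assms NF_mod_imp_quasi[of A R b thy i]
    unfolding ac_root_def by (auto simp: quasi_App alien_def)
qed

lemma quasi_ac_eq: "(s, t) \<in> ac_eq A \<Longrightarrow> quasi thy i A R s \<Longrightarrow> quasi thy i A R t"
  unfolding ac_eq_ctxt_cl_sym
proof (induction rule: rtrancl_induct)
  case (step y z)
  show ?case
  proof (rule quasi_ctxt_cl[OF step(2)])
    show "quasi thy i A R y" using step by blast
  next
    fix a b assume "(a, b) \<in> ctxt_cl (ac_root A \<union> (ac_root A)\<inverse>)" "NF_mod A R a"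
    then show "NF_mod A R b"
      using NF_mod_ac_eq unfolding ac_eq_ctxt_cl_sym by blast
  qed (rule quasi_ac_root_sym)
qed

definition pure_rules :: "('f \<Rightarrow> nat) \<Rightarrow> (('n, 'v, 'f) trm \<times> ('n, 'v, 'f) trm) set \<Rightarrow> bool" where
  "pure_rules thy R \<longleftrightarrow>
     (\<forall>(l, r) \<in> R. \<exists>j. pure_over (\<lambda>f. thy f = j) l \<and> pure_over (\<lambda>f. thy f = j) r \<and> rule_wf (l, r))"

lemma pure_rule_at_head:
  assumes "pure_rules thy R" "(l, r) \<in> R" "subst \<sigma> l = App (Th g) ts"
  shows "pure_over (\<lambda>f. thy f = thy g) l" "pure_over (\<lambda>f. thy f = thy g) r" "vars r \<subseteq> vars l"
proof -
  obtain j where j: "pure_over (\<lambda>f. thy f = j) l" "pure_over (\<lambda>f. thy f = j) r" "rule_wf (l, r)"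
    using assms(1,2) unfolding pure_rules_def by blast
  then obtain g' ls where "l = App (Th g') ls" "thy g' = j"
    unfolding rule_wf_def by (cases l; cases "case l of App f _ \<Rightarrow> f") auto
  with assms(3) have "thy g = j"
    by simp
  with j show "pure_over (\<lambda>f. thy f = thy g) l" "pure_over (\<lambda>f. thy f = thy g) r" "vars r \<subseteq> vars l"
    unfolding rule_wf_def by simp_all
qed

lemma vars_subst: "vars (subst \<sigma> t) = (\<Union>x\<in>vars t. vars (\<sigma> x))"
  by (induction t) auto

lemma subst_var_subterm: "x \<in> vars t \<Longrightarrow> \<sigma> x \<in> subterms (subst \<sigma> t)"
  by (induction t) (auto simp: subterms_refl)

lemma vars_rstep:
  assumes "pure_rules thy R" "(s, t) \<in> rstep R"
  shows "vars t \<subseteq> vars s"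
  using assms(2) unfolding rstep_def
proof (induction rule: ctxt_cl.induct)
  case (base s t)
  then obtain \<sigma> l r where "s = subst \<sigma> l" "t = subst \<sigma> r" "(l, r) \<in> R"
    unfolding rinst_def by blast
  moreover from this(3) assms(1) have "vars r \<subseteq> vars l"
    unfolding pure_rules_def rule_wf_def by auto
  ultimately show ?case
    by (simp add: vars_subst) blast
qed auto

lemma quasi_subst_pure:
  "pure_over (\<lambda>f. thy f = i) t \<Longrightarrow> (\<forall>x\<in>vars t. quasi thy i A R (\<sigma> x))
     \<Longrightarrow> quasi thy i A R (subst \<sigma> t)"
proof (induction t)
  case (App f ts)
  then show ?case by (cases f) (auto simp: quasi_App alien_def list_all_iff)
qed auto

lemma not_NF_mod_rinst: "(s, t) \<in> rinst R \<Longrightarrow> \<not> NF_mod A R s"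
  unfolding NF_mod_def using rstep_imp_rstep_mod[unfolded rstep_def] ctxt_cl.base by blast

lemma redex_in_layer:
  assumes "pure_rules thy R" "(l, r) \<in> R" "quasi thy i A R (subst \<sigma> l)"
  shows "pure_over (\<lambda>f. thy f = i) l" "pure_over (\<lambda>f. thy f = i) r" "vars r \<subseteq> vars l"
proof -
  have "(subst \<sigma> l, subst \<sigma> r) \<in> rinst R"
    using assms(2) unfolding rinst_def by blast
  then obtain g ts where "subst \<sigma> l = App (Th g) ts" "thy g = i"
    using assms(3) not_NF_mod_rinst quasi_not_NF_mod_imp_layer by metis
  then show "pure_over (\<lambda>f. thy f = i) l" "pure_over (\<lambda>f. thy f = i) r" "vars r \<subseteq> vars l"
    using pure_rule_at_head[OF assms(1,2)] by auto
qed

lemma quasi_rinst: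
  assumes "pure_rules thy R" "(s, t) \<in> rinst R" "quasi thy i A R s"
  shows "quasi thy i A R t"
proof -
  obtain \<sigma> l r where s: "s = subst \<sigma> l" and t: "t = subst \<sigma> r" and lr: "(l, r) \<in> R"
    using assms(2) unfolding rinst_def by blast
  note layer = redex_in_layer[OF assms(1) lr assms(3)[unfolded s]]
  have "\<forall>x\<in>vars r. quasi thy i A R (\<sigma> x)"
  proof
    fix x assume "x \<in> vars r"
    with layer(3) have "x \<in> vars l"
      by blast
    then have "\<sigma> x \<in> subterms s"
      unfolding s by (rule subst_var_subterm)
    with assms(3) show "quasi thy i A R (\<sigma> x)"
      by (rule quasi_subterm)
  qed
  with layer(2) show ?thesis
    unfolding t by (rule quasi_subst_pure)
qed

lemma quasi_rstep:
  assumes "pure_rules thy R" "(s, t) \<in> rstep R" "quasi thy i A R s"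
  shows "quasi thy i A R t"
  using assms(2,3) unfolding rstep_def
proof (rule quasi_ctxt_cl)
  fix a b assume "(a, b) \<in> ctxt_cl (rinst R)" "NF_mod A R a"
  then show "NF_mod A R b"
    using rstep_imp_rstep_mod[of a b R A] unfolding rstep_def NF_mod_def by blast
qed (rule quasi_rinst[OF assms(1)])

lemma quasi_rstep_mod:
  assumes "pure_rules thy R" "(s, t) \<in> rstep_mod A R" "quasi thy i A R s"
  shows "quasi thy i A R t"
  using assms(2,3) unfolding rstep_mod_def
  by (blast intro: quasi_ac_eq quasi_rstep[OF assms(1)])

lemma ground_rstep_mod:
  assumes "pure_rules thy R" "(s, t) \<in> rstep_mod A R" "ground s"
  shows "ground t"
proof -
  obtain s' t' where "(s, s') \<in> ac_eq A" "(s', t') \<in> rstep R" "(t', t) \<in> ac_eq A"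
    using assms(2) unfolding rstep_mod_def by blast
  moreover from this(1) assms(3) have "ground s'"
    by (rule ground_ac_eq)
  ultimately show ?thesis
    using vars_rstep[OF assms(1)] ground_ac_eq unfolding ground_def by blast
qed

lemma absF_subst_pure:
  "pure_over (\<lambda>f. thy f = i) t \<Longrightarrow>
     absF thy i vE (subst \<sigma> t) = subst (\<lambda>x. absF thy i vE (\<sigma> x)) t"
proof (induction t)
  case (App f ts)
  then show ?case by (cases f) (auto simp: list_all_iff)
qed auto

lemma absF_rinst:
  assumes "pure_rules thy R" "(s, t) \<in> rinst R" "quasi thy i A R s"
  shows "(absF thy i vE s, absF thy i vE t) \<in> rinst R"
proof -
  obtain \<sigma> l r where s: "s = subst \<sigma> l" and t: "t = subst \<sigma> r" and lr: "(l, r) \<in> R"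
    using assms(2) unfolding rinst_def by blast
  note layer = redex_in_layer[OF assms(1) lr assms(3)[unfolded s]]
  have "absF thy i vE s = subst (\<lambda>x. absF thy i vE (\<sigma> x)) l"
    unfolding s using layer(1) by (rule absF_subst_pure)
  moreover have "absF thy i vE t = subst (\<lambda>x. absF thy i vE (\<sigma> x)) r"
    unfolding t using layer(2) by (rule absF_subst_pure)
  ultimately show ?thesis
    using lr unfolding rinst_def by blast
qed

lemma absF_rstep:
  assumes "pure_rules thy R" "(s, t) \<in> rstep R" "quasi thy i A R s"
  shows "(absF thy i vE s, absF thy i vE t) \<in> rstep R"
  using assms(2,3) unfolding rstep_def
proof (induction rule: ctxt_cl.induct)
  case (base s t)
  then show ?case
    using absF_rinst[OF assms(1)] by (blast intro: ctxt_cl.base)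
next
  case (ctxt s t f ss us)
  have "(App f (ss @ s # us), App f (ss @ t # us)) \<in> rstep_mod A R"
    using ctxt.hyps unfolding rstep_def[symmetric] by (intro rstep_imp_rstep_mod rstep_mod_ctxt)
  then obtain g where "f = Th g" "thy g = i"
    using ctxt.prems quasi_not_NF_mod_imp_layer unfolding NF_mod_def by (metis trm.inject(3))
  moreover have "(absF thy i vE s, absF thy i vE t) \<in> ctxt_cl (rinst R)"
    using ctxt.IH ctxt.prems by (simp add: quasi_App)
  ultimately show ?case
    by (auto intro: ctxt_cl.ctxt)
qed

lemma absF_ac_step:
  assumes vE_ac: "\<forall>s t. ground s \<longrightarrow> (s, t) \<in> ac_eq A \<longrightarrow> vE s = vE t"
    and "(s, t) \<in> ctxt_cl (ac_root A \<union> (ac_root A)\<inverse>)" "ground s"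
  shows "(absF thy i vE s, absF thy i vE t) \<in> ac_eq A"
proof -
  have "absF thy i vE s = absF thy i vE t
      \<or> (absF thy i vE s, absF thy i vE t) \<in> ctxt_cl (ac_root A \<union> (ac_root A)\<inverse>)"
    if "(s, t) \<in> ctxt_cl (ac_root A \<union> (ac_root A)\<inverse>)" "ground s" for s t
    using that
  proof (induction rule: ctxt_cl.induct)
    case (base s t)
    then have "vE s = vE t"
      using vE_ac unfolding ac_eq_ctxt_cl_sym by (blast intro: ctxt_cl.base)
    with base(1) show ?case
      unfolding ac_root_def by (auto intro!: ctxt_cl.base split: if_splits)
  next
    case (ctxt s t f ss us)
    have "vE (App f (ss @ s # us)) = vE (App f (ss @ t # us))"
      using vE_ac ctxt.hyps ctxt.prems unfolding ac_eq_ctxt_cl_sym by (blast intro: ctxt_cl.ctxt)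
    moreover have "ground s"
      using ctxt.prems unfolding ground_def by auto
    ultimately show ?case
      using ctxt.IH by (cases f rule: sym.exhaust) (auto intro: ctxt_cl.ctxt)
  qed
  then show ?thesis
    using assms(2,3) unfolding ac_eq_ctxt_cl_sym by (metis r_into_rtrancl rtrancl.rtrancl_refl)
qed

lemma absF_ac_eq:
  assumes vE_ac: "\<forall>s t. ground s \<longrightarrow> (s, t) \<in> ac_eq A \<longrightarrow> vE s = vE t"
    and "(s, t) \<in> ac_eq A" "ground s"
  shows "(absF thy i vE s, absF thy i vE t) \<in> ac_eq A"
  using assms(2,3) unfolding ac_eq_ctxt_cl_sym
proof (induction rule: rtrancl_induct)
  case (step t u)
  then have "ground t"
    using ground_ac_eq unfolding ac_eq_ctxt_cl_sym by blast
  with step have "(absF thy i vE t, absF thy i vE u) \<in> ac_eq A"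
    by (blast intro: absF_ac_step[OF vE_ac])
  with step show ?case
    using ac_eq_trans unfolding ac_eq_ctxt_cl_sym by blast
qed simp

lemma absF_rstep_mod:
  assumes "\<forall>s t. ground s \<longrightarrow> (s, t) \<in> ac_eq A \<longrightarrow> vE s = vE t"
    and "pure_rules thy R" "(s, t) \<in> rstep_mod A R" "ground s" "quasi thy i A R s"
  shows "(absF thy i vE s, absF thy i vE t) \<in> rstep_mod A R"
proof -
  obtain s' t' where s': "(s, s') \<in> ac_eq A" and s't': "(s', t') \<in> rstep R"
    and t': "(t', t) \<in> ac_eq A"
    using assms(3) unfolding rstep_mod_def by blast
  have "ground s'" "quasi thy i A R s'"
    using s' assms(4,5) by (auto intro: ground_ac_eq quasi_ac_eq)
  moreover from this have "ground t'"
    using s't' vars_rstep[OF assms(2)] unfolding ground_def by blast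
  ultimately show ?thesis
    using absF_ac_eq[OF assms(1) s' assms(4)] absF_rstep[OF assms(2) s't']
      absF_ac_eq[OF assms(1) t'] unfolding rstep_mod_def by blast
qed

lemma quasi_absF_rsteps_mod:
  assumes "\<forall>s t. ground s \<longrightarrow> (s, t) \<in> ac_eq A \<longrightarrow> vE s = vE t"
    and "pure_rules thy R" "(s, t) \<in> (rstep_mod A R)\<^sup>*" "ground s" "quasi thy i A R s"
  shows "quasi thy i A R t \<and> (absF thy i vE s, absF thy i vE t) \<in> (rstep_mod A R)\<^sup>*"
proof -
  have "ground t \<and> quasi thy i A R t \<and> (absF thy i vE s, absF thy i vE t) \<in> (rstep_mod A R)\<^sup>*"
    using assms(3)
  proof (induction rule: rtrancl_induct)
    case (step t u)
    then show ?case
      using ground_rstep_mod[OF assms(2)] quasi_rstep_mod[OF assms(2)]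
        absF_rstep_mod[OF assms(1,2)] by (blast intro: rtrancl_into_rtrancl)
  qed (use assms(4,5) in simp)
  then show ?thesis by blast
qed

theorem proposition2:
  fixes n :: nat
    and thy :: "'f \<Rightarrow> nat"
    and acs :: "nat \<Rightarrow> 'f option"
    and R :: "nat \<Rightarrow> (('n, 'v, 'f) trm \<times> ('n, 'v, 'f) trm) set"
    and vE :: "('n, 'v, 'f) trm \<Rightarrow> 'v"
    and i :: nat
    and M N :: "('n, 'v, 'f) trm"
  assumes sig: "\<forall>f. thy f \<in> {1..n}"
    and ac_sig: "\<forall>j f. acs j = Some f \<longrightarrow> thy f = j"
    and rules_sig: "\<forall>j\<in>{1..n}. \<forall>lr\<in>R j.
          pure_over (\<lambda>f. thy f = j) (fst lr) \<and> pure_over (\<lambda>f. thy f = j) (snd lr) \<and> rule_wf lr"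
    and conv_each: "\<forall>j\<in>{1..n}. terminating_mod (set_option (acs j)) (R j)
                                 \<and> confluent_mod (set_option (acs j)) (R j)"
    and conv: "terminating_mod (\<Union>j\<in>{1..n}. set_option (acs j)) (\<Union>j\<in>{1..n}. R j)
             \<and> confluent_mod (\<Union>j\<in>{1..n}. set_option (acs j)) (\<Union>j\<in>{1..n}. R j)"
    and vE: "\<forall>s t. ground s \<longrightarrow> ground t \<longrightarrow>
          (vE s = vE t \<longleftrightarrow> (s, t) \<in> eq_mod (\<Union>j\<in>{1..n}. set_option (acs j)) (\<Union>j\<in>{1..n}. R j))"
    and i: "i \<in> {1..n}"
    and gM: "ground M"
    and qM: "quasi thy i (\<Union>j\<in>{1..n}. set_option (acs j)) (\<Union>j\<in>{1..n}. R j) M"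
    and red: "(M, N) \<in> (rstep_mod (\<Union>j\<in>{1..n}. set_option (acs j)) (\<Union>j\<in>{1..n}. R j))\<^sup>*"
  shows "quasi thy i (\<Union>j\<in>{1..n}. set_option (acs j)) (\<Union>j\<in>{1..n}. R j) N
       \<and> (absF thy i vE M, absF thy i vE N)
           \<in> (rstep_mod (\<Union>j\<in>{1..n}. set_option (acs j)) (\<Union>j\<in>{1..n}. R j))\<^sup>*"
proof -
  let ?A = "\<Union>j\<in>{1..n}. set_option (acs j)" and ?R = "\<Union>j\<in>{1..n}. R j"
  have "pure_rules thy ?R"
    using rules_sig unfolding pure_rules_def by fastforce
  moreover have "\<forall>s t. ground s \<longrightarrow> (s, t) \<in> ac_eq ?A \<longrightarrow> vE s = vE t"
    using vE ground_ac_eq ac_eq_subset_eq_mod by blast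
  ultimately show ?thesis
    using quasi_absF_rsteps_mod red gM qM by blast
qed

end
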